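(* Let $y(\tau_s)=(q_s,v_s,t_s)\in\mathbb{R}^{n_q}\times\mathbb{R}^{n_q}\times\mathbb{R}$ be given such that $f_c(q_s)=0$ and $n(q_s)^\top v_s\le 0$. Then the ordinary differential equation $$y'=f_{\mathrm{aux,n}}(y):=\begin{bmatrix}\mathbf{0}_{n_q,1}\\ M(q)^{-1}n(q)\,a_{\mathrm{n}}\\ 0\end{bmatrix},$$ with a constant $a_{\mathrm{n}}>0$, is an auxiliary dynamical system (in the sense defined in the context), with jump duration $$\tau_{\mathrm{jump}}=-\frac{n(q_s)^\top v_s}{D(q_s)\,a_{\mathrm{n}}}.$$
   Context: Let $f_c:\mathbb{R}^{n_q}\to\mathbb{R}$ and $M:\mathbb{R}^{n_q}\to\mathbb{R}^{n_q\times n_q}$ be at least twice continuously differentiable, with $M(q)$ symmetric positive definite for all $q$. Let $n(q):=\nabla_q f_c(q)$ and $D(q):=n(q)^\top M(q)^{-1}n(q)$. The state is $y=(q,v,t)\in\mathbb{R}^{n_q}\times\mathbb{R}^{n_q}\times\mathbb{R}$ ($q$ position, $v$ velocity, $t$ clock state / physical time), evolving in numerical time $\tau$, with $y'=\mathrm{d}y/\mathrm{d}\tau$. An auxiliary dynamical system $y'(\tau)=f_{\mathrm{aux,n}}(y(\tau))$ is one that satisfies, for every initial value $y(\tau_s)=(q_s,v_s,t_s)$ with $f_c(q_s)=0$ and $n(q_s)^\top v_s<0$, on a well-defined finite time interval $(\tau_s,\tau_r)$ of length $\tau_{\mathrm{jump}}=\tau_r-\tau_s$, the properties: (i) $f_c(q(\tau))\le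 0$ and $t'(\tau)=0$ for all $\tau\in(\tau_s,\tau_r)$; (ii) $n(q(\tau_r))^\top v(\tau_r)=0$; (iii) $f_c(q(\tau_r))=0$. *)

theory Defs
  imports "HOL-Analysis.Analysis"
begin

definition C2_on_UNIV :: "('a::real_normed_vector \<Rightarrow> 'b::real_normed_vector) \<Rightarrow> bool" where
  "C2_on_UNIV f \<longleftrightarrow> (\<exists>(f' :: 'a \<Rightarrow> 'a \<Rightarrow>\<^sub>L 'b) (f'' :: 'a \<Rightarrow> 'a \<Rightarrow>\<^sub>L ('a \<Rightarrow>\<^sub>L 'b)).
      (\<forall>x. (f has_derivative blinfun_apply (f' x)) (at x)) \<and>
      (\<forall>x. (f' has_derivative blinfun_apply (f'' x)) (at x)) \<and>
      continuous_on UNIV f'')"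

definition f_aux_n ::
  "(real^'n \<Rightarrow> real^'n^'n) \<Rightarrow> (real^'n \<Rightarrow> real^'n) \<Rightarrow> real
     \<Rightarrow> (real^'n) \<times> (real^'n) \<times> real \<Rightarrow> (real^'n) \<times> (real^'n) \<times> real" where
  "f_aux_n M ngrad a_n y =
     (let q = fst y in (0, a_n *\<^sub>R (matrix_inv (M q) *v ngrad q), 0))"

definition is_solution ::
  "('s::real_normed_vector \<Rightarrow> 's) \<Rightarrow> real \<Rightarrow> real \<Rightarrow> 's \<Rightarrow> (real \<Rightarrow> 's) \<Rightarrow> bool" where
  "is_solution f tau_s tau_r ys y \<longleftrightarrow> y tau_s = ys \<and>
     (\<forall>tau\<in>{tau_s..tau_r}. (y has_vector_derivative f (y tau)) (at tau within {tau_s..tau_r}))"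

text \<open>The auxiliary-dynamical-system properties (i)--(iii) for the initial value ys
  at numerical time tau_s, with jump duration tau_jump (so tau_r = tau_s + tau_jump):
  the interval is well defined (a solution exists on it) and every solution satisfies
  (i)--(iii).\<close>
definition aux_system_from ::
  "((real^'n) \<times> (real^'n) \<times> real \<Rightarrow> (real^'n) \<times> (real^'n) \<times> real) \<Rightarrow> (real^'n \<Rightarrow> real)
     \<Rightarrow> (real^'n \<Rightarrow> real^'n) \<Rightarrow> real \<Rightarrow> (real^'n) \<times> (real^'n) \<times> real \<Rightarrow> real \<Rightarrow> bool" where
  "aux_system_from f fc ngrad tau_s ys tau_jump \<longleftrightarrow>
     (let tau_r = tau_s + tau_jump in
       0 \<le> tau_jump \<and>
       (\<exists>y. is_solution f tau_s tau_r ys y) \<and>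
       (\<forall>y. is_solution f tau_s tau_r ys y \<longrightarrow>
          (\<forall>tau\<in>{tau_s<..<tau_r}. fc (fst (y tau)) \<le> 0 \<and>
               ((\<lambda>s. snd (snd (y s))) has_real_derivative 0) (at tau)) \<and>
          ngrad (fst (y tau_r)) \<bullet> fst (snd (y tau_r)) = 0 \<and>
          fc (fst (y tau_r)) = 0))"

end

theory Submission
  imports Defs
begin

text \<open>Along the auxiliary flow the position is frozen, so the velocity field is the constant
  \<open>c = a\<^sub>n M(q\<^sub>s)\<^sup>-\<^sup>1 n(q\<^sub>s)\<close> and every solution is
  \<open>(q\<^sub>s, v\<^sub>s + (\<tau> - \<tau>\<^sub>s) c, t\<^sub>s)\<close>. Hence \<open>f\<^sub>c(q) = 0\<close> and \<open>t' = 0\<close> throughout,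
  while the normal velocity grows linearly with slope \<open>a\<^sub>n D(q\<^sub>s)\<close>, which is positive
  by definiteness of \<open>M\<close> unless \<open>n(q\<^sub>s) = 0\<close>; in that case the normal velocity vanishes
  identically and the duration is \<open>0\<close> by division by zero.\<close>

lemma pos_def_matrix_invertible:
  fixes A :: "real^'n^'n"
  assumes pd: "\<And>x. x \<noteq> 0 \<Longrightarrow> x \<bullet> (A *v x) > 0"
  shows "invertible A"
proof -
  have "\<forall>x. A *v x = 0 \<longrightarrow> x = 0"
    using pd by (metis inner_zero_right less_irrefl)
  then show ?thesis
    using matrix_left_invertible_ker invertible_left_inverse by blast
qed

lemma matrix_inv_right:
  fixes A :: "'a::semiring_1^'n^'n"
  assumes "invertible A"
  shows "A ** matrix_inv A = mat 1"
  using assms unfolding invertible_def matrix_inv_def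
  by (rule someI_ex[where P = "\<lambda>A'. A ** A' = mat 1 \<and> A' ** A = mat 1", THEN conjunct1])

lemma pos_def_inner_matrix_inv_pos:
  fixes A :: "real^'n^'n"
  assumes pd: "\<And>x. x \<noteq> 0 \<Longrightarrow> x \<bullet> (A *v x) > 0" and "n \<noteq> 0"
  shows "n \<bullet> (matrix_inv A *v n) > 0"
proof -
  define w where "w = matrix_inv A *v n"
  have Aw: "A *v w = n"
    using matrix_inv_right[OF pos_def_matrix_invertible[OF pd]]
    by (simp add: w_def matrix_vector_mul_assoc)
  with \<open>n \<noteq> 0\<close> have "w \<noteq> 0"
    by auto
  then have "w \<bullet> (A *v w) > 0"
    using pd by blast
  then show ?thesis
    using Aw by (simp add: w_def inner_commute)
qed

lemma pos_def_inner_matrix_inv_nonneg: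
  fixes A :: "real^'n^'n"
  assumes "\<And>x. x \<noteq> 0 \<Longrightarrow> x \<bullet> (A *v x) > 0"
  shows "n \<bullet> (matrix_inv A *v n) \<ge> 0"
  using pos_def_inner_matrix_inv_pos[OF assms] by (cases "n = 0") force+

lemma has_vector_derivative_const_imp_affine:
  fixes f :: "real \<Rightarrow> 'a::real_normed_vector"
  assumes f': "\<And>s. s \<in> {a..b} \<Longrightarrow> (f has_vector_derivative c) (at s within {a..b})"
    and "x \<in> {a..b}"
  shows "f x = f a + (x - a) *\<^sub>R c"
proof -
  have "((\<lambda>s. f s - (s - a) *\<^sub>R c) has_vector_derivative 0) (at s within {a..b})"
    if "s \<in> {a..b}" for s
    using f'[OF that] by (auto intro!: derivative_eq_intros)
  then obtain k where "\<And>s. s \<in> {a..b} \<Longrightarrow> f s - (s - a) *\<^sub>R c = k"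
    using has_vector_derivative_zero_constant[of "{a..b}"] by blast
  from this[of x] this[of a] \<open>x \<in> {a..b}\<close> show ?thesis
    by (simp add: algebra_simps)
qed

lemma f_aux_n_affine_solution:
  "is_solution (f_aux_n M ngrad a_n) a b (q, v, t)
     (\<lambda>\<tau>. (q, v + (\<tau> - a) *\<^sub>R (a_n *\<^sub>R (matrix_inv (M q) *v ngrad q)), t))"
  unfolding is_solution_def f_aux_n_def
  by (auto intro!: derivative_eq_intros)

lemma f_aux_n_solution_eq_affine:
  assumes sol: "is_solution (f_aux_n M ngrad a_n) a b (q, v, t) y" and "\<tau> \<in> {a..b}"
  shows "y \<tau> = (q, v + (\<tau> - a) *\<^sub>R (a_n *\<^sub>R (matrix_inv (M q) *v ngrad q)), t)"
proof -
  define c where "c = a_n *\<^sub>R (matrix_inv (M q) *v ngrad q)"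
  have y0: "y a = (q, v, t)"
    and y': "\<And>s. s \<in> {a..b} \<Longrightarrow>
      (y has_vector_derivative f_aux_n M ngrad a_n (y s)) (at s within {a..b})"
    using sol unfolding is_solution_def by auto
  have "((\<lambda>s. fst (y s)) has_vector_derivative 0) (at s within {a..b})" if "s \<in> {a..b}" for s
    using bounded_linear.has_vector_derivative[OF bounded_linear_fst y'[OF that]]
    by (simp add: f_aux_n_def Let_def)
  then have "fst (y s) = q" if "s \<in> {a..b}" for s
    using has_vector_derivative_const_imp_affine[of a b "\<lambda>s. fst (y s)" 0 s] that y0 by simp
  then have "(y has_vector_derivative (0, c, 0)) (at s within {a..b})" if "s \<in> {a..b}" for s
    using y'[OF that] that by (simp add: f_aux_n_def c_def)
  from has_vector_derivative_const_imp_affine[OF this \<open>\<tau> \<in> {a..b}\<close>] show ?thesis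
    by (simp add: y0 c_def)
qed

lemma normal_velocity_at_jump_end:
  fixes A :: "real^'n^'n"
  assumes pd: "\<And>x. x \<noteq> 0 \<Longrightarrow> x \<bullet> (A *v x) > 0" and "a_n > 0"
  shows "n \<bullet> (v + (- (n \<bullet> v) / ((n \<bullet> (matrix_inv A *v n)) * a_n))
                     *\<^sub>R (a_n *\<^sub>R (matrix_inv A *v n))) = 0"
proof (cases "n = 0")
  case False
  then have "n \<bullet> (matrix_inv A *v n) > 0"
    using pos_def_inner_matrix_inv_pos[OF pd] by blast
  with \<open>a_n > 0\<close> show ?thesis
    by (simp add: inner_add_right inner_diff_right)
qed simp

theorem proposition1:
  fixes fc :: "real^'n \<Rightarrow> real"
    and M :: "real^'n \<Rightarrow> real^'n^'n"
    and ngrad :: "real^'n \<Rightarrow> real^'n"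
    and a_n tau_s t_s :: real
    and q_s v_s :: "real^'n"
  assumes fc_C2: "C2_on_UNIV fc"
    and M_C2: "C2_on_UNIV M"
    and M_sym: "\<And>q. transpose (M q) = M q"
    and M_pd: "\<And>q x. x \<noteq> 0 \<Longrightarrow> x \<bullet> (M q *v x) > 0"
    and ngrad_def: "\<And>q. (fc has_derivative (\<lambda>h. ngrad q \<bullet> h)) (at q)"
    and a_pos: "a_n > 0"
    and on_surf: "fc q_s = 0"
    and approach: "ngrad q_s \<bullet> v_s \<le> 0"
  shows "aux_system_from (f_aux_n M ngrad a_n) fc ngrad tau_s (q_s, v_s, t_s)
           (- (ngrad q_s \<bullet> v_s) / ((ngrad q_s \<bullet> (matrix_inv (M q_s) *v ngrad q_s)) * a_n))"
proof -
  define J where "J = - (ngrad q_s \<bullet> v_s) / ((ngrad q_s \<bullet> (matrix_inv (M q_s) *v ngrad q_s)) * a_n)"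
  define c where "c = a_n *\<^sub>R (matrix_inv (M q_s) *v ngrad q_s)"
  let ?sol = "is_solution (f_aux_n M ngrad a_n) tau_s (tau_s + J) (q_s, v_s, t_s)"
  have "J \<ge> 0"
    using pos_def_inner_matrix_inv_nonneg[OF M_pd] a_pos approach
    by (simp add: J_def divide_nonpos_nonneg)
  have "fc (fst (y \<tau>)) \<le> 0 \<and> ((\<lambda>s. snd (snd (y s))) has_real_derivative 0) (at \<tau>)"
    if "?sol y" "\<tau> \<in> {tau_s<..<tau_s + J}" for y \<tau>
    using f_aux_n_solution_eq_affine[OF \<open>?sol y\<close>] that(2) on_surf
    by (auto intro: has_field_derivative_transform_within_open[of "\<lambda>_. t_s" 0 \<tau>
          "{tau_s<..<tau_s + J}"])
  moreover have "y (tau_s + J) = (q_s, v_s + J *\<^sub>R c, t_s)" if "?sol y" for y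
    using f_aux_n_solution_eq_affine[OF that, of "tau_s + J"] \<open>J \<ge> 0\<close> by (simp add: c_def)
  moreover have "ngrad q_s \<bullet> (v_s + J *\<^sub>R c) = 0"
    using normal_velocity_at_jump_end[OF M_pd a_pos] by (simp add: J_def c_def)
  ultimately show ?thesis
    using \<open>J \<ge> 0\<close> f_aux_n_affine_solution on_surf
    unfolding aux_system_from_def J_def[symmetric] Let_def by fastforce
qed

end
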